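(* If $p\in I(f)$ then $p$ is a quasi-homogeneous singularity of $\eta$.
   Context: Let $n=3$. Let $f:\mathbb P^3\dashrightarrow\mathbb P^2$, $f=(F_0:F_1:F_2^\gamma)$ with $F_0,F_1,F_2$ homogeneous without common factors, $\deg F_0=\deg F_1=\gamma\deg F_2=\nu\geq 2$, $\gamma\geq 2$, be generic, i.e. $dF_0\wedge dF_1\wedge dF_2\neq 0$ at every point of $\tilde f^{-1}(0)\setminus\{0\}$ ($\tilde f$ the lift to $\mathbb C^{4}$); $I(f)=\Pi(\tilde f^{-1}(0))$ is its indeterminacy locus. Let $\mathcal G$ be a foliation of degree $d\geq 2$ on $\mathbb P^2$ leaving the line $Z=0$ invariant, defined by $ZA\,dX+ZB\,dY+C\,dZ$ with $XA+YB+C=0$, all of whose singularities are nondegenerate with nonreal characteristic numbers, whose only algebraic invariant curve is that line, and such that $\mathrm{Sing}(\mathcal G)$ does not meet $Y_2(f)=\Pi_2[\tilde f\{w: dF_0\wedge dF_1\wedge dF_2(w)=0\}]$. Let $\mathcal F=f^*\mathcal G$. Near $p\in I(f)$ there is a local chart $(x_0,x_1,x_2)$ with $\tilde f=(x_0,x_1,x_2^\gamma)$, in which $\mathcal F$ is represented by $\eta=x_2A(x_0,x_1,x_2^\gamma)dx_0+x_2B(x_0,x_1,x_2^\gamma)dx_1+\gamma C(x_0,x_1,x_2^\gamma)dx_2$. A point $p$ is a quasi-homogeneous singularity of an integrable $1$-form $\omega$ on a neighborhood of $p\in\mathbb C^3$ if, writing $d\omega=i_{\mathcal Z}\mu$ for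 a holomorphic $3$-form $\mu$ with $\mu(p)\neq 0$ and holomorphic vector field $\mathcal Z$, $p$ is an isolated singularity of $\mathcal Z$ and all eigenvalues of $D\mathcal Z(p)$ are zero. *)

theory Defs
  imports "HOL-Analysis.Analysis"
begin

type_synonym cfun3 = "complex \<Rightarrow> complex \<Rightarrow> complex \<Rightarrow> complex"

definition app3 :: "cfun3 \<Rightarrow> complex \<times> complex \<times> complex \<Rightarrow> complex" where
  "app3 F q = (case q of (x, y, z) \<Rightarrow> F x y z)"

definition comp3 :: "nat \<Rightarrow> complex \<times> complex \<times> complex \<Rightarrow> complex" where
  "comp3 l q = (case q of (x, y, z) \<Rightarrow> (if l = 0 then x else if l = 1 then y else z))"

definition hpoly :: "nat \<Rightarrow> cfun3 \<Rightarrow> bool" where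
  "hpoly k F \<longleftrightarrow> (\<exists>c :: nat \<Rightarrow> nat \<Rightarrow> complex. \<forall>x y z.
      F x y z = (\<Sum>i\<le>k. \<Sum>j\<le>k - i. c i j * x ^ i * y ^ j * z ^ (k - i - j)))"

definition pd :: "nat \<Rightarrow> cfun3 \<Rightarrow> cfun3" where
  "pd i F = (\<lambda>x y z. if i = 0 then deriv (\<lambda>t. F t y z) x
                      else if i = 1 then deriv (\<lambda>t. F x t z) y
                      else deriv (\<lambda>t. F x y t) z)"

text \<open>Holomorphic on an open set of C^3: continuous and holomorphic in each variable
  separately (equivalent to holomorphy by Osgood's lemma).\<close>
definition holo3 :: "(complex \<times> complex \<times> complex) set \<Rightarrow> cfun3 \<Rightarrow> bool" where
  "holo3 U F \<longleftrightarrow> continuous_on U (app3 F) \<and>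
     (\<forall>x y z. (x, y, z) \<in> U \<longrightarrow>
        (\<lambda>t. F t y z) field_differentiable (at x) \<and>
        (\<lambda>t. F x t z) field_differentiable (at y) \<and>
        (\<lambda>t. F x y t) field_differentiable (at z))"

definition eigenvalue3 :: "(nat \<Rightarrow> nat \<Rightarrow> complex) \<Rightarrow> complex \<Rightarrow> bool" where
  "eigenvalue3 M mu \<longleftrightarrow> (\<exists>v :: nat \<Rightarrow> complex. (\<exists>i<3. v i \<noteq> 0) \<and>
      (\<forall>i<3. (\<Sum>j<3. M i j * v j) = mu * v i))"

text \<open>Coefficient of dx_i /\ dx_j in d(omega), omega = sum_l omega_l dx_l.\<close>
definition dcoef :: "(nat \<Rightarrow> cfun3) \<Rightarrow> nat \<Rightarrow> nat \<Rightarrow> cfun3" where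
  "dcoef \<omega> i j = (\<lambda>x y z. pd i (\<omega> j) x y z - pd j (\<omega> i) x y z)"

text \<open>Quasi-homogeneous singularity: d(omega) = i_Z mu with mu = m dx0/\dx1/\dx2,
  m(p) \<noteq> 0, Z holomorphic; p is an isolated zero of Z and DZ(p) has only zero eigenvalues.
  Note i_Z(m dx0/\dx1/\dx2) = m (Z0 dx1/\dx2 - Z1 dx0/\dx2 + Z2 dx0/\dx1).\<close>
definition quasi_hom_sing :: "(nat \<Rightarrow> cfun3) \<Rightarrow> complex \<times> complex \<times> complex \<Rightarrow> bool" where
  "quasi_hom_sing \<omega> p \<longleftrightarrow> (\<exists>U m Z. open U \<and> p \<in> U \<and> holo3 U m \<and> (\<forall>i<3. holo3 U (Z i)) \<and>
     app3 m p \<noteq> 0 \<and>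
     (\<forall>q\<in>U. app3 (dcoef \<omega> 1 2) q = app3 m q * app3 (Z 0) q \<and>
             app3 (dcoef \<omega> 0 2) q = - (app3 m q * app3 (Z 1) q) \<and>
             app3 (dcoef \<omega> 0 1) q = app3 m q * app3 (Z 2) q) \<and>
     (\<forall>i<3. app3 (Z i) p = 0) \<and>
     (\<exists>V. open V \<and> p \<in> V \<and> V \<subseteq> U \<and> (\<forall>q\<in>V. q \<noteq> p \<longrightarrow> (\<exists>i<3. app3 (Z i) q \<noteq> 0))) \<and>
     (\<forall>mu. eigenvalue3 (\<lambda>i j. app3 (pd j (Z i)) p) mu \<longrightarrow> mu = 0))"

text \<open>The homogeneous 1-form Z A dX + Z B dY + C dZ on C^3 defining the foliation on P^2.\<close>
definition fol_form :: "cfun3 \<Rightarrow> cfun3 \<Rightarrow> cfun3 \<Rightarrow> nat \<Rightarrow> cfun3" where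
  "fol_form A B C i = (if i = 0 then (\<lambda>x y z. z * A x y z)
                       else if i = 1 then (\<lambda>x y z. z * B x y z) else C)"

definition singC :: "(nat \<Rightarrow> cfun3) \<Rightarrow> (complex \<times> complex \<times> complex) set" where
  "singC P = {q. q \<noteq> (0, 0, 0) \<and> (\<forall>i<3. app3 (P i) q = 0)}"

definition proj_class :: "complex \<times> complex \<times> complex \<Rightarrow> (complex \<times> complex \<times> complex) set" where
  "proj_class q = {(c * comp3 0 q, c * comp3 1 q, c * comp3 2 q) | c. c \<noteq> 0}"

text \<open>Standard affine charts of P^2: chart i is {x_i = 1}, with affine coordinates
  (x_(cidx1 i), x_(cidx2 i)).\<close>
definition cidx1 :: "nat \<Rightarrow> nat" where "cidx1 i = (if i = 0 then 1 else 0)"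
definition cidx2 :: "nat \<Rightarrow> nat" where "cidx2 i = (if i = 2 then 1 else 2)"

definition emb :: "nat \<Rightarrow> complex \<Rightarrow> complex \<Rightarrow> complex \<times> complex \<times> complex" where
  "emb i u v = (if i = 0 then (1, u, v) else if i = 1 then (u, 1, v) else (u, v, 1))"

text \<open>In chart i the foliation is given by P_j du + P_k dv (j = cidx1 i, k = cidx2 i),
  i.e. by the vector field (P_k, - P_j).\<close>
definition nondeg_nonreal_sing :: "(nat \<Rightarrow> cfun3) \<Rightarrow> complex \<times> complex \<times> complex \<Rightarrow> bool" where
  "nondeg_nonreal_sing P q \<longleftrightarrow> (\<forall>i<3. comp3 i q \<noteq> 0 \<longrightarrow>
     (let u0 = comp3 (cidx1 i) q / comp3 i q; v0 = comp3 (cidx2 i) q / comp3 i q;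
          V1 = (\<lambda>u v. app3 (P (cidx2 i)) (emb i u v));
          V2 = (\<lambda>u v. - app3 (P (cidx1 i)) (emb i u v));
          J11 = deriv (\<lambda>u. V1 u v0) u0; J12 = deriv (\<lambda>v. V1 u0 v) v0;
          J21 = deriv (\<lambda>u. V2 u v0) u0; J22 = deriv (\<lambda>v. V2 u0 v) v0;
          tr = J11 + J22; dt = J11 * J22 - J12 * J21
      in dt \<noteq> 0 \<and> (\<forall>l1 l2. l1 + l2 = tr \<and> l1 * l2 = dt \<longrightarrow> l1 / l2 \<notin> \<real>)))"

definition irreducible_hpoly :: "nat \<Rightarrow> cfun3 \<Rightarrow> bool" where
  "irreducible_hpoly k F \<longleftrightarrow> hpoly k F \<and> (\<exists>x y z. F x y z \<noteq> 0) \<and>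
     \<not> (\<exists>a b G H. 1 \<le> a \<and> 1 \<le> b \<and> a + b = k \<and> hpoly a G \<and> hpoly b H \<and>
          (\<forall>x y z. F x y z = G x y z * H x y z))"

text \<open>The curve {F = 0} (F irreducible) is invariant by the foliation of degree d defined by
  the form P: dF /\ omega = F * Theta for a polynomial 2-form Theta (coefficients of degree d).\<close>
definition invariant_hpoly :: "(nat \<Rightarrow> cfun3) \<Rightarrow> nat \<Rightarrow> cfun3 \<Rightarrow> bool" where
  "invariant_hpoly P d F \<longleftrightarrow> (\<exists>H :: nat \<Rightarrow> cfun3. (\<forall>l<3. hpoly d (H l)) \<and>
     (\<forall>x y z.
        pd 0 F x y z * P 1 x y z - pd 1 F x y z * P 0 x y z = F x y z * H 2 x y z \<and>
        pd 0 F x y z * P 2 x y z - pd 2 F x y z * P 0 x y z = F x y z * H 1 x y z \<and>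
        pd 1 F x y z * P 2 x y z - pd 2 F x y z * P 1 x y z = F x y z * H 0 x y z))"

text \<open>The local model of the pull-back foliation near p in I(f): in the chart (x0,x1,x2)
  with f = (x0, x1, x2^gamma), p = origin.\<close>
definition eta :: "nat \<Rightarrow> cfun3 \<Rightarrow> cfun3 \<Rightarrow> cfun3 \<Rightarrow> nat \<Rightarrow> cfun3" where
  "eta \<gamma> A B C i = (if i = 0 then (\<lambda>x0 x1 x2. x2 * A x0 x1 (x2 ^ \<gamma>))
                     else if i = 1 then (\<lambda>x0 x1 x2. x2 * B x0 x1 (x2 ^ \<gamma>))
                     else (\<lambda>x0 x1 x2. of_nat \<gamma> * C x0 x1 (x2 ^ \<gamma>)))"

end

theory Submission
  imports Defs
begin

text \<open>
  With \<open>m = 1\<close>, the vector field \<open>\<Z>\<close> of \<open>d\<eta> = i\<^sub>\<Z> (dx\<^sub>0 \<and> dx\<^sub>1 \<and> dx\<^sub>2)\<close> is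
  computed explicitly: writing \<open>D = \<partial>B/\<partial>X - \<partial>A/\<partial>Y\<close>, \<open>N = \<gamma>(d + 1) + 1\<close> and evaluating at
  \<open>(x\<^sub>0, x\<^sub>1, x\<^sub>2\<^sup>\<gamma>)\<close>, the relation \<open>XA + YB + C = 0\<close> and Euler's identity give
  \<open>\<Z> = (-N B + \<gamma> x\<^sub>0 D, N A + \<gamma> x\<^sub>1 D, x\<^sub>2 D)\<close>. Restricted to each coordinate axis
  every component is a monomial of degree at least 2, so \<open>D\<Z>(0) = 0\<close>.

  A zero of \<open>\<Z>\<close> other than the origin projects to a singular point of \<open>\<G>\<close>. If \<open>x\<^sub>2 \<noteq> 0\<close>
  it lies in the chart \<open>Z = 1\<close>, where the trace \<open>D\<close> of the linear part vanishes, so the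
  eigenvalues are \<open>\<lambda>, -\<lambda>\<close>. If \<open>x\<^sub>2 = 0\<close> it lies on the invariant line, where the linear
  part is triangular with eigenvalue ratio \<open>-1/\<gamma>\<close>. Both contradict the nonreal
  characteristic numbers, so the origin is an isolated zero of \<open>\<Z>\<close>.
\<close>

type_synonym coeffs = "nat \<Rightarrow> nat \<Rightarrow> complex"

definition hom_poly :: "nat \<Rightarrow> coeffs \<Rightarrow> cfun3" where
  "hom_poly k c x y z = (\<Sum>i\<le>k. \<Sum>j\<le>k-i. c i j * x^i * y^j * z^(k-i-j))"

text \<open>Formal partial derivatives; the truncated exponent \<open>i - 1\<close> only occurs with the factor
  \<open>i = 0\<close>.\<close>
definition hom_poly_dx :: "nat \<Rightarrow> coeffs \<Rightarrow> cfun3" where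
  "hom_poly_dx k c x y z = (\<Sum>i\<le>k. \<Sum>j\<le>k-i. (of_nat i * c i j) * x^(i-1) * y^j * z^(k-i-j))"

definition hom_poly_dy :: "nat \<Rightarrow> coeffs \<Rightarrow> cfun3" where
  "hom_poly_dy k c x y z = (\<Sum>i\<le>k. \<Sum>j\<le>k-i. (of_nat j * c i j) * x^i * y^(j-1) * z^(k-i-j))"

definition hom_poly_dz :: "nat \<Rightarrow> coeffs \<Rightarrow> cfun3" where
  "hom_poly_dz k c x y z = (\<Sum>i\<le>k. \<Sum>j\<le>k-i. (of_nat (k-i-j) * c i j) * x^i * y^j * z^(k-i-j-1))"

lemma DERIV_power_field:
  "((\<lambda>t. t^n) has_field_derivative (of_nat n * x^(n-1))) (at x)"
  by (rule derivative_eq_intros refl)+ simp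

lemma hom_poly_has_derivative_x:
  "((\<lambda>t. hom_poly k c t y z) has_field_derivative hom_poly_dx k c x y z) (at x)"
  unfolding hom_poly_def hom_poly_dx_def
  by (intro DERIV_sum) (rule derivative_eq_intros refl DERIV_power_field | simp)+

lemma hom_poly_has_derivative_y:
  "((\<lambda>t. hom_poly k c x t z) has_field_derivative hom_poly_dy k c x y z) (at y)"
  unfolding hom_poly_def hom_poly_dy_def
  by (intro DERIV_sum) (rule derivative_eq_intros refl DERIV_power_field | simp)+

lemma hom_poly_has_derivative_z:
  "((\<lambda>t. hom_poly k c x y t) has_field_derivative hom_poly_dz k c x y z) (at z)"
  unfolding hom_poly_def hom_poly_dz_def
  by (intro DERIV_sum) (rule derivative_eq_intros refl DERIV_power_field | simp)+

lemma hom_poly_euler: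
  "x * hom_poly_dx k c x y z + y * hom_poly_dy k c x y z + z * hom_poly_dz k c x y z =
     of_nat k * hom_poly k c x y z"
proof -
  have monomial_euler:
    "x * ((of_nat i * c i j) * x^(i-1) * y^j * z^e) + y * ((of_nat j * c i j) * x^i * y^(j-1) * z^e)
      + z * ((of_nat e * c i j) * x^i * y^j * z^(e-1)) = of_nat (i + j + e) * (c i j * x^i * y^j * z^e)"
    for i j e
    by (cases i; cases j; cases e) (simp_all add: algebra_simps)
  show ?thesis
    unfolding hom_poly_def hom_poly_dx_def hom_poly_dy_def hom_poly_dz_def
      sum_distrib_left sum.distrib[symmetric]
    by (intro sum.cong refl) (simp only: monomial_euler, simp)
qed

lemma hpoly_iff_hom_poly: "hpoly k F \<longleftrightarrow> (\<exists>c. F = hom_poly k c)"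
  unfolding hpoly_def hom_poly_def by (auto simp: fun_eq_iff)

definition hom3 :: "nat \<Rightarrow> cfun3 \<Rightarrow> bool" where
  "hom3 k F \<longleftrightarrow> (\<forall>l x y z. F (l*x) (l*y) (l*z) = l^k * F x y z)"

lemma hom3_monomial:
  assumes "c = 0 \<or> a + b + e = k"
  shows "hom3 k (\<lambda>x y z. c * x^a * y^b * z^e)"
  using assms unfolding hom3_def
  by (auto simp: power_mult_distrib power_add[symmetric] algebra_simps)

lemma hom3_sum:
  "(\<And>i. i \<in> S \<Longrightarrow> hom3 k (F i)) \<Longrightarrow> hom3 k (\<lambda>x y z. \<Sum>i\<in>S. F i x y z)"
  unfolding hom3_def by (simp add: sum_distrib_left)

lemma hom3_diff: "hom3 k F \<Longrightarrow> hom3 k G \<Longrightarrow> hom3 k (\<lambda>x y z. F x y z - G x y z)"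
  unfolding hom3_def by (simp add: algebra_simps)

lemma hom3_hom_poly: "hom3 k (hom_poly k c)"
  unfolding hom_poly_def[abs_def]
  by (intro hom3_sum hom3_monomial) auto

lemma hom3_hom_poly_dx: "hom3 (k - 1) (hom_poly_dx k c)"
  unfolding hom_poly_dx_def[abs_def]
  by (intro hom3_sum hom3_monomial) auto

lemma hom3_hom_poly_dy: "hom3 (k - 1) (hom_poly_dy k c)"
  unfolding hom_poly_dy_def[abs_def]
  by (intro hom3_sum hom3_monomial) auto

lemma hom3_divide: "hom3 k F \<Longrightarrow> F (x/w) (y/w) (z/w) = F x y z / w^k"
  unfolding hom3_def by (metis divide_inverse_commute inverse_eq_divide power_inverse)

lemma hom3_divide_relation:
  assumes "hom3 d F" "hom3 (d - 1) G" "1 \<le> d" "w \<noteq> 0" "a * F x y z = b * w * G x y z"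
  shows "a * F (x/w) (y/w) (z/w) = b * G (x/w) (y/w) (z/w)"
proof -
  have "w^d = w * w^(d - 1)"
    using \<open>1 \<le> d\<close> by (metis Suc_diff_le diff_Suc_1 power_Suc)
  then show ?thesis
    using assms by (simp add: hom3_divide)
qed

lemma hom3_axes:
  assumes "hom3 k F"
  shows "F t 0 0 = t^k * F 1 0 0" "F 0 t 0 = t^k * F 0 1 0" "F 0 0 t = t^k * F 0 0 1"
  using assms unfolding hom3_def by (metis mult_1_right mult_zero_right)+

lemma hom3_origin: "hom3 k F \<Longrightarrow> 1 \<le> k \<Longrightarrow> F 0 0 0 = 0"
  using hom3_axes(1)[of k F 0] by simp

lemma app3_conv: "app3 F = (\<lambda>q. F (fst q) (fst (snd q)) (snd (snd q)))"
  by (auto simp: app3_def fun_eq_iff split: prod.split)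

lemma holo3_const: "holo3 U (\<lambda>x y z. c)"
  unfolding holo3_def app3_conv by auto

lemma holo3_vars: "holo3 U (\<lambda>x y z. x)" "holo3 U (\<lambda>x y z. y)" "holo3 U (\<lambda>x y z. z)"
  unfolding holo3_def app3_conv by (auto intro!: continuous_intros)

lemma holo3_add:
  "holo3 U F \<Longrightarrow> holo3 U G \<Longrightarrow> holo3 U (\<lambda>x y z. F x y z + G x y z)"
  unfolding holo3_def app3_conv by (auto intro!: continuous_intros field_differentiable_add)

lemma holo3_mult:
  "holo3 U F \<Longrightarrow> holo3 U G \<Longrightarrow> holo3 U (\<lambda>x y z. F x y z * G x y z)"
  unfolding holo3_def app3_conv by (auto intro!: continuous_intros field_differentiable_mult)

lemma holo3_diff:
  "holo3 U F \<Longrightarrow> holo3 U G \<Longrightarrow> holo3 U (\<lambda>x y z. F x y z - G x y z)"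
  unfolding holo3_def app3_conv by (auto intro!: continuous_intros field_differentiable_diff)

lemma holo3_power: "holo3 U F \<Longrightarrow> holo3 U (\<lambda>x y z. F x y z ^ n)"
  by (induction n) (auto intro: holo3_const holo3_mult)

lemma holo3_sum:
  "finite S \<Longrightarrow> (\<And>i. i \<in> S \<Longrightarrow> holo3 U (F i)) \<Longrightarrow> holo3 U (\<lambda>x y z. \<Sum>i\<in>S. F i x y z)"
  by (induction S rule: finite_induct) (auto intro: holo3_const holo3_add)

lemma holo3_if: "holo3 U F \<Longrightarrow> holo3 U G \<Longrightarrow> holo3 U (\<lambda>x y z. if b then F x y z else G x y z)"
  by (cases b) simp_all

lemmas holo3_intros =
  holo3_if holo3_const holo3_vars holo3_add holo3_mult holo3_diff holo3_power holo3_sum finite_atMost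

lemma holo3_hom_poly_subst:
  "holo3 U (\<lambda>x y z. hom_poly k c x y (z^g))" "holo3 U (\<lambda>x y z. hom_poly_dx k c x y (z^g))"
  "holo3 U (\<lambda>x y z. hom_poly_dy k c x y (z^g))"
  unfolding hom_poly_def hom_poly_dx_def hom_poly_dy_def by (intro holo3_intros)+

definition curl2 :: "nat \<Rightarrow> coeffs \<Rightarrow> coeffs \<Rightarrow> cfun3" where
  "curl2 d cA cB x y z = hom_poly_dx d cB x y z - hom_poly_dy d cA x y z"

abbreviation eta_weight :: "nat \<Rightarrow> nat \<Rightarrow> complex" where
  "eta_weight \<gamma> d \<equiv> of_nat (Suc (\<gamma> * Suc d))"

text \<open>The vector field \<open>\<Z>\<close> with \<open>d\<eta> = i\<^sub>\<Z> (dx\<^sub>0 \<and> dx\<^sub>1 \<and> dx\<^sub>2)\<close> (see \<open>dcoef_eta_12\<close>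
  and its siblings), simplified by means of \<open>XA + YB + C = 0\<close> and Euler's identity.\<close>
definition eta_field :: "nat \<Rightarrow> nat \<Rightarrow> coeffs \<Rightarrow> coeffs \<Rightarrow> nat \<Rightarrow> cfun3" where
  "eta_field \<gamma> d cA cB i = (\<lambda>x0 x1 x2.
     if i = 0 then
       - eta_weight \<gamma> d * hom_poly d cB x0 x1 (x2^\<gamma>) + of_nat \<gamma> * x0 * curl2 d cA cB x0 x1 (x2^\<gamma>)
     else if i = 1 then
       eta_weight \<gamma> d * hom_poly d cA x0 x1 (x2^\<gamma>) + of_nat \<gamma> * x1 * curl2 d cA cB x0 x1 (x2^\<gamma>)
     else x2 * curl2 d cA cB x0 x1 (x2^\<gamma>))"

lemma holo3_eta_field: "holo3 U (eta_field \<gamma> d cA cB i)"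
  unfolding eta_field_def curl2_def
  by (intro holo3_intros holo3_hom_poly_subst)

lemma hom3_curl2: "hom3 (d - 1) (curl2 d cA cB)"
  unfolding curl2_def[abs_def] by (intro hom3_diff hom3_hom_poly_dx hom3_hom_poly_dy)

lemma deriv_times_hom_poly_subst:
  "deriv (\<lambda>t. t * hom_poly k c x y (t^g)) z =
     hom_poly k c x y (z^g) + of_nat g * (z^g * hom_poly_dz k c x y (z^g))"
proof -
  have "((\<lambda>t. t * hom_poly k c x y (t^g)) has_field_derivative
      z * (hom_poly_dz k c x y (z^g) * (of_nat g * z^(g-1))) + 1 * hom_poly k c x y (z^g)) (at z)"
    by (rule DERIV_mult' DERIV_ident DERIV_chain2 hom_poly_has_derivative_z DERIV_power_field)+
  moreover have "z * (hom_poly_dz k c x y (z^g) * (of_nat g * z^(g-1))) =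
      of_nat g * (z^g * hom_poly_dz k c x y (z^g))"
    by (cases g) (auto simp: algebra_simps)
  ultimately show ?thesis by (simp add: DERIV_imp_deriv)
qed

lemma hom_poly_field_differentiable [simp]:
  "(\<lambda>t. hom_poly k c t y z) field_differentiable at x"
  "(\<lambda>t. hom_poly k c x t z) field_differentiable at y"
  "(\<lambda>t. hom_poly k c x y t) field_differentiable at z"
  using hom_poly_has_derivative_x hom_poly_has_derivative_y hom_poly_has_derivative_z
  unfolding field_differentiable_def by blast+

lemma var_times_hom_poly_field_differentiable [simp]:
  "(\<lambda>t. t * hom_poly k c x y t) field_differentiable at z"
  by (intro field_differentiable_mult field_differentiable_ident hom_poly_field_differentiable)

lemma deriv_hom_poly [simp]:
  "deriv (\<lambda>t. hom_poly k c t y z) x = hom_poly_dx k c x y z"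
  "deriv (\<lambda>t. hom_poly k c x t z) y = hom_poly_dy k c x y z"
  "deriv (\<lambda>t. hom_poly k c x y t) z = hom_poly_dz k c x y z"
  by (intro DERIV_imp_deriv hom_poly_has_derivative_x hom_poly_has_derivative_y
      hom_poly_has_derivative_z)+

context
  fixes cA cB cC :: coeffs and d :: nat
  assumes euler_relation:
    "\<forall>x y z. x * hom_poly d cA x y z + y * hom_poly d cB x y z + hom_poly (Suc d) cC x y z = 0"
begin

lemma hom_poly_Suc_eq:
  "hom_poly (Suc d) cC x y z = - (x * hom_poly d cA x y z) - y * hom_poly d cB x y z"
  using euler_relation[rule_format, of x y z] by algebra

lemma hom_poly_dx_Suc_eq:
  "hom_poly_dx (Suc d) cC x y z =
     - (hom_poly d cA x y z + x * hom_poly_dx d cA x y z) - y * hom_poly_dx d cB x y z"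
proof -
  have "((\<lambda>t. hom_poly (Suc d) cC t y z) has_field_derivative
      - (hom_poly d cA x y z + x * hom_poly_dx d cA x y z) - y * hom_poly_dx d cB x y z) (at x)"
    unfolding hom_poly_Suc_eq by (rule derivative_eq_intros hom_poly_has_derivative_x refl | simp)+
  then show ?thesis using hom_poly_has_derivative_x DERIV_unique by metis
qed

lemma hom_poly_dy_Suc_eq:
  "hom_poly_dy (Suc d) cC x y z =
     - (x * hom_poly_dy d cA x y z) - (hom_poly d cB x y z + y * hom_poly_dy d cB x y z)"
proof -
  have "((\<lambda>t. hom_poly (Suc d) cC x t z) has_field_derivative
      - (x * hom_poly_dy d cA x y z) - (hom_poly d cB x y z + y * hom_poly_dy d cB x y z)) (at y)"
    unfolding hom_poly_Suc_eq by (rule derivative_eq_intros hom_poly_has_derivative_y refl | simp)+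
  then show ?thesis using hom_poly_has_derivative_y DERIV_unique by metis
qed

lemma dcoef_eta_01:
  "dcoef (eta \<gamma> (hom_poly d cA) (hom_poly d cB) (hom_poly (Suc d) cC)) 0 1 x0 x1 x2 =
     eta_field \<gamma> d cA cB 2 x0 x1 x2"
  unfolding dcoef_def pd_def eta_def eta_field_def curl2_def
  by (simp add: algebra_simps)

lemma dcoef_eta_12:
  "dcoef (eta \<gamma> (hom_poly d cA) (hom_poly d cB) (hom_poly (Suc d) cC)) 1 2 x0 x1 x2 =
     eta_field \<gamma> d cA cB 0 x0 x1 x2"
proof -
  let ?S = "x2^\<gamma>"
  have "dcoef (eta \<gamma> (hom_poly d cA) (hom_poly d cB) (hom_poly (Suc d) cC)) 1 2 x0 x1 x2 =
      of_nat \<gamma> * hom_poly_dy (Suc d) cC x0 x1 ?S - (hom_poly d cB x0 x1 ?S + of_nat \<gamma> * (?S * hom_poly_dz d cB x0 x1 ?S))"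
    unfolding dcoef_def pd_def eta_def by (simp add: deriv_times_hom_poly_subst)
  also have "\<dots> = eta_field \<gamma> d cA cB 0 x0 x1 x2"
    using arg_cong[OF hom_poly_euler[of x0 d cB x1 ?S], of "\<lambda>w. of_nat \<gamma> * w"]
    by (simp add: hom_poly_dy_Suc_eq eta_field_def curl2_def algebra_simps)
  finally show ?thesis .
qed

lemma dcoef_eta_02:
  "dcoef (eta \<gamma> (hom_poly d cA) (hom_poly d cB) (hom_poly (Suc d) cC)) 0 2 x0 x1 x2 =
     - eta_field \<gamma> d cA cB 1 x0 x1 x2"
proof -
  let ?S = "x2^\<gamma>"
  have "dcoef (eta \<gamma> (hom_poly d cA) (hom_poly d cB) (hom_poly (Suc d) cC)) 0 2 x0 x1 x2 =
      of_nat \<gamma> * hom_poly_dx (Suc d) cC x0 x1 ?S - (hom_poly d cA x0 x1 ?S + of_nat \<gamma> * (?S * hom_poly_dz d cA x0 x1 ?S))"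
    unfolding dcoef_def pd_def eta_def by (simp add: deriv_times_hom_poly_subst)
  also have "\<dots> = - eta_field \<gamma> d cA cB 1 x0 x1 x2"
    using arg_cong[OF hom_poly_euler[of x0 d cA x1 ?S], of "\<lambda>w. of_nat \<gamma> * w"]
    by (simp add: hom_poly_dx_Suc_eq eta_field_def curl2_def algebra_simps)
  finally show ?thesis .
qed

end

definition nonreal_char_ratio :: "complex \<Rightarrow> complex \<Rightarrow> bool" where
  "nonreal_char_ratio tr dt \<longleftrightarrow> (\<forall>l1 l2. l1 + l2 = tr \<and> l1 * l2 = dt \<longrightarrow> l1 / l2 \<notin> \<real>)"

lemma nonreal_char_ratio_trace_nonzero:
  assumes "nonreal_char_ratio tr dt"
  shows "tr \<noteq> 0"
proof
  assume "tr = 0"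
  define l where "l = csqrt (- dt)"
  have "l + - l = tr \<and> l * - l = dt"
    using \<open>tr = 0\<close> by (simp add: l_def power2_eq_square[symmetric])
  moreover have "l / - l \<in> \<real>"
    by (cases "l = 0") simp_all
  ultimately show False
    using assms unfolding nonreal_char_ratio_def by blast
qed

lemma nonreal_char_ratio_not_real_multiple:
  assumes "nonreal_char_ratio (l1 + l2) (l1 * l2)"
  shows "l1 \<noteq> of_real r * l2"
proof
  assume "l1 = of_real r * l2"
  then have "l1 / l2 \<in> \<real>"
    by (cases "l2 = 0") simp_all
  then show False
    using assms unfolding nonreal_char_ratio_def by blast
qed

lemma nondeg_nonreal_sing_chart:
  assumes "nondeg_nonreal_sing P q" and "i < 3" and "comp3 i q \<noteq> 0"
  defines "u0 \<equiv> comp3 (cidx1 i) q / comp3 i q" and "v0 \<equiv> comp3 (cidx2 i) q / comp3 i q"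
  defines "V1 \<equiv> \<lambda>u v. app3 (P (cidx2 i)) (emb i u v)"
    and "V2 \<equiv> \<lambda>u v. - app3 (P (cidx1 i)) (emb i u v)"
  shows "nonreal_char_ratio (deriv (\<lambda>u. V1 u v0) u0 + deriv (\<lambda>v. V2 u0 v) v0)
    (deriv (\<lambda>u. V1 u v0) u0 * deriv (\<lambda>v. V2 u0 v) v0
      - deriv (\<lambda>v. V1 u0 v) v0 * deriv (\<lambda>u. V2 u v0) u0)"
  using assms unfolding nondeg_nonreal_sing_def nonreal_char_ratio_def Let_def by blast

context
  fixes cA cB cC :: coeffs and d \<gamma> :: nat
  assumes euler_relation:
    "\<forall>x y z. x * hom_poly d cA x y z + y * hom_poly d cB x y z + hom_poly (Suc d) cC x y z = 0"
    and nondeg: "\<forall>q\<in>singC (fol_form (hom_poly d cA) (hom_poly d cB) (hom_poly (Suc d) cC)).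
                   nondeg_nonreal_sing (fol_form (hom_poly d cA) (hom_poly d cB) (hom_poly (Suc d) cC)) q"
    and d_pos: "1 \<le> d" and \<gamma>_pos: "1 \<le> \<gamma>"
begin

text \<open>In the chart \<open>Z = 1\<close> the trace of the linear part is \<open>curl2\<close>, and a traceless linear
  part has eigenvalue ratio \<open>-1\<close>.\<close>
lemma curl2_nonzero_at_affine_singularity:
  assumes "S \<noteq> 0" "hom_poly d cA X Y S = 0" "hom_poly d cB X Y S = 0"
  shows "curl2 d cA cB X Y S \<noteq> 0"
proof -
  let ?P = "fol_form (hom_poly d cA) (hom_poly d cB) (hom_poly (Suc d) cC)"
  have "(X, Y, S) \<in> singC ?P"
    using assms hom_poly_Suc_eq[OF euler_relation, of X Y S] unfolding singC_def
    by (auto simp: app3_def fol_form_def less_Suc_eq numeral_3_eq_3)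
  then have "\<exists>dt. nonreal_char_ratio (curl2 d cA cB (X/S) (Y/S) (S/S)) dt"
    using nondeg_nonreal_sing_chart[of ?P "(X, Y, S)" 2] nondeg \<open>S \<noteq> 0\<close>
    by (auto simp: comp3_def cidx1_def cidx2_def app3_def emb_def fol_form_def curl2_def)
  then have "curl2 d cA cB (X/S) (Y/S) (S/S) \<noteq> 0"
    using nonreal_char_ratio_trace_nonzero by blast
  then show ?thesis
    by (simp only: hom3_divide[OF hom3_curl2]) simp
qed

lemma eta_field_at_infinity:
  "eta_field \<gamma> d cA cB 0 X Y 0 = 0 \<longleftrightarrow>
     eta_weight \<gamma> d * hom_poly d cB X Y 0 = of_nat \<gamma> * X * curl2 d cA cB X Y 0"
  "eta_field \<gamma> d cA cB 1 X Y 0 = 0 \<longleftrightarrow>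
     eta_weight \<gamma> d * hom_poly d cA X Y 0 = - of_nat \<gamma> * Y * curl2 d cA cB X Y 0"
proof -
  have Z: "eta_field \<gamma> d cA cB 0 X Y 0 =
        - eta_weight \<gamma> d * hom_poly d cB X Y 0 + of_nat \<gamma> * X * curl2 d cA cB X Y 0"
      "eta_field \<gamma> d cA cB 1 X Y 0 =
        eta_weight \<gamma> d * hom_poly d cA X Y 0 + of_nat \<gamma> * Y * curl2 d cA cB X Y 0"
    using \<gamma>_pos by (simp_all add: eta_field_def power_0_left del: of_nat_Suc)
  show "eta_field \<gamma> d cA cB 0 X Y 0 = 0 \<longleftrightarrow>
      eta_weight \<gamma> d * hom_poly d cB X Y 0 = of_nat \<gamma> * X * curl2 d cA cB X Y 0"
    unfolding Z(1) by algebra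
  show "eta_field \<gamma> d cA cB 1 X Y 0 = 0 \<longleftrightarrow>
      eta_weight \<gamma> d * hom_poly d cA X Y 0 = - of_nat \<gamma> * Y * curl2 d cA cB X Y 0"
    unfolding Z(2) by algebra
qed

lemma singular_point_at_infinity:
  assumes "(X, Y) \<noteq> (0, 0)"
    and "eta_field \<gamma> d cA cB 0 X Y 0 = 0" and "eta_field \<gamma> d cA cB 1 X Y 0 = 0"
  shows "(X, Y, 0) \<in> singC (fol_form (hom_poly d cA) (hom_poly d cB) (hom_poly (Suc d) cC))"
proof -
  have e1: "eta_weight \<gamma> d * hom_poly d cB X Y 0 = of_nat \<gamma> * X * curl2 d cA cB X Y 0"
    and e2: "eta_weight \<gamma> d * hom_poly d cA X Y 0 = - of_nat \<gamma> * Y * curl2 d cA cB X Y 0"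
    using assms(2,3) eta_field_at_infinity by blast+
  have "eta_weight \<gamma> d * (X * hom_poly d cA X Y 0 + Y * hom_poly d cB X Y 0) =
      X * (eta_weight \<gamma> d * hom_poly d cA X Y 0) + Y * (eta_weight \<gamma> d * hom_poly d cB X Y 0)"
    by (simp only: distrib_left mult.left_commute)
  also have "\<dots> = 0"
    by (simp only: e1 e2) (simp add: algebra_simps)
  finally have "X * hom_poly d cA X Y 0 + Y * hom_poly d cB X Y 0 = 0"
    by (simp only: mult_eq_0_iff of_nat_eq_0_iff) simp
  then have "hom_poly (Suc d) cC X Y 0 = 0"
    using hom_poly_Suc_eq[OF euler_relation, of X Y 0] by algebra
  then show ?thesis
    using assms(1) unfolding singC_def
    by (auto simp: app3_def fol_form_def less_Suc_eq numeral_3_eq_3)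
qed

text \<open>In the chart \<open>X = 1\<close> the linear part at such a point is triangular with eigenvalue ratio
  \<open>-1/\<gamma>\<close>.\<close>
lemma eta_field_zero_at_infinity_imp_x0_eq_0:
  assumes "eta_field \<gamma> d cA cB 0 X Y 0 = 0" and "eta_field \<gamma> d cA cB 1 X Y 0 = 0"
  shows "X = 0"
proof (rule ccontr)
  assume "X \<noteq> 0"
  let ?P = "fol_form (hom_poly d cA) (hom_poly d cB) (hom_poly (Suc d) cC)"
  define u where "u = Y / X"
  define b where "b = hom_poly d cB 1 u 0"
  define J where "J = hom_poly_dy (Suc d) cC 1 u 0"
  have "(X, Y, 0) \<in> singC ?P"
    using singular_point_at_infinity assms \<open>X \<noteq> 0\<close> by simp
  then have chart: "nonreal_char_ratio (J + - b) (J * - b)"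
    using nondeg_nonreal_sing_chart[of ?P "(X, Y, 0)" 0] nondeg \<open>X \<noteq> 0\<close>
    by (auto simp: comp3_def cidx1_def cidx2_def app3_def emb_def fol_form_def J_def b_def u_def)
  have "eta_weight \<gamma> d * b = of_nat \<gamma> * curl2 d cA cB 1 u 0"
    using hom3_divide_relation[OF hom3_hom_poly hom3_curl2 d_pos \<open>X \<noteq> 0\<close>
        assms(1)[unfolded eta_field_at_infinity]] \<open>X \<noteq> 0\<close>
    by (simp add: u_def b_def)
  moreover have "hom_poly_dx d cB 1 u 0 + u * hom_poly_dy d cB 1 u 0 = of_nat d * b"
    using hom_poly_euler[of 1 d cB u 0] by (simp add: b_def)
  ultimately have "of_nat \<gamma> * J = b"
    unfolding J_def hom_poly_dy_Suc_eq[OF euler_relation] curl2_def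
    by (simp add: algebra_simps b_def) algebra
  then have "J = of_real (- 1 / of_nat \<gamma>) * - b"
    using \<gamma>_pos by (simp add: field_simps)
  then show False
    using nonreal_char_ratio_not_real_multiple[OF chart] by blast
qed

lemma eta_field_zero_at_infinity_imp_x1_eq_0:
  assumes "eta_field \<gamma> d cA cB 0 X Y 0 = 0" and "eta_field \<gamma> d cA cB 1 X Y 0 = 0"
  shows "Y = 0"
proof (rule ccontr)
  assume "Y \<noteq> 0"
  let ?P = "fol_form (hom_poly d cA) (hom_poly d cB) (hom_poly (Suc d) cC)"
  define u where "u = X / Y"
  define a where "a = hom_poly d cA u 1 0"
  define J where "J = hom_poly_dx (Suc d) cC u 1 0"
  have "(X, Y, 0) \<in> singC ?P"
    using singular_point_at_infinity assms \<open>Y \<noteq> 0\<close> by simp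
  then have chart: "nonreal_char_ratio (J + - a) (J * - a)"
    using nondeg_nonreal_sing_chart[of ?P "(X, Y, 0)" 1] nondeg \<open>Y \<noteq> 0\<close>
    by (auto simp: comp3_def cidx1_def cidx2_def app3_def emb_def fol_form_def J_def a_def u_def)
  have "eta_weight \<gamma> d * a = - of_nat \<gamma> * curl2 d cA cB u 1 0"
    using hom3_divide_relation[OF hom3_hom_poly hom3_curl2 d_pos \<open>Y \<noteq> 0\<close>
        assms(2)[unfolded eta_field_at_infinity]] \<open>Y \<noteq> 0\<close>
    by (simp add: u_def a_def)
  moreover have "u * hom_poly_dx d cA u 1 0 + hom_poly_dy d cA u 1 0 = of_nat d * a"
    using hom_poly_euler[of u d cA 1 0] by (simp add: a_def)
  ultimately have "of_nat \<gamma> * J = a"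
    unfolding J_def hom_poly_dx_Suc_eq[OF euler_relation] curl2_def
    by (simp add: algebra_simps a_def) algebra
  then have "J = of_real (- 1 / of_nat \<gamma>) * - a"
    using \<gamma>_pos by (simp add: field_simps)
  then show False
    using nonreal_char_ratio_not_real_multiple[OF chart] by blast
qed

lemma eta_field_zero_imp_origin:
  assumes "\<forall>i<3. eta_field \<gamma> d cA cB i x0 x1 x2 = 0"
  shows "(x0, x1, x2) = (0, 0, 0)"
proof -
  have Z: "eta_field \<gamma> d cA cB i x0 x1 x2 = 0" if "i \<in> {0, 1, 2}" for i
    using assms that by auto
  show ?thesis
  proof (cases "x2 = 0")
    case True
    then have "eta_field \<gamma> d cA cB 0 x0 x1 0 = 0" "eta_field \<gamma> d cA cB 1 x0 x1 0 = 0"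
      using Z by auto
    then show ?thesis
      using eta_field_zero_at_infinity_imp_x0_eq_0 eta_field_zero_at_infinity_imp_x1_eq_0 True by blast
  next
    case False
    have "eta_weight \<gamma> d \<noteq> 0"
      by (simp only: of_nat_eq_0_iff)
    have "curl2 d cA cB x0 x1 (x2^\<gamma>) = 0"
      using Z[of 2] False by (simp add: eta_field_def)
    moreover from this have "hom_poly d cB x0 x1 (x2^\<gamma>) = 0" "hom_poly d cA x0 x1 (x2^\<gamma>) = 0"
      using Z[of 0] Z[of 1] \<open>eta_weight \<gamma> d \<noteq> 0\<close> by (simp_all add: eta_field_def del: of_nat_Suc)
    ultimately show ?thesis
      using curl2_nonzero_at_affine_singularity False by simp
  qed
qed

end

lemma pd_origin_eq_0_of_axis_monomials:
  assumes "\<And>t. F t 0 0 = a * t^k" "\<And>t. F 0 t 0 = b * t^m" "\<And>t. F 0 0 t = c * t^n"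
    and "2 \<le> k" "2 \<le> m" "2 \<le> n"
  shows "pd j F 0 0 0 = 0"
proof -
  have "deriv (\<lambda>t. e * t^l) 0 = 0" if "2 \<le> l" for e :: complex and l
  proof -
    have "((\<lambda>t. e * t^l) has_field_derivative e * (of_nat l * 0^(l - 1))) (at 0)"
      by (intro DERIV_cmult DERIV_power_field)
    then show ?thesis
      using that by (simp add: DERIV_imp_deriv)
  qed
  moreover have "F 0 0 = (\<lambda>t. c * t^n)"
    using assms(3) by auto
  ultimately show ?thesis
    using assms unfolding pd_def by simp
qed

lemma hom_poly_on_axes:
  "hom_poly d c t 0 0 = t^d * hom_poly d c 1 0 0" "hom_poly d c 0 t 0 = t^d * hom_poly d c 0 1 0"
  "hom_poly d c 0 0 (t^\<gamma>) = t^(\<gamma> * d) * hom_poly d c 0 0 1"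
  using hom3_axes[OF hom3_hom_poly] by (metis power_mult mult.commute)+

lemma curl2_on_axes:
  assumes "1 \<le> d"
  shows "t * curl2 d cA cB t 0 0 = t^d * curl2 d cA cB 1 0 0"
    "t * curl2 d cA cB 0 t 0 = t^d * curl2 d cA cB 0 1 0"
    "t * curl2 d cA cB 0 0 (t^\<gamma>) = t^(\<gamma> * (d - 1) + 1) * curl2 d cA cB 0 0 1"
proof -
  have "t * t^(d - 1) = t^d"
    using assms by (simp add: power_Suc[symmetric])
  then show "t * curl2 d cA cB t 0 0 = t^d * curl2 d cA cB 1 0 0"
    "t * curl2 d cA cB 0 t 0 = t^d * curl2 d cA cB 0 1 0"
    using hom3_axes[OF hom3_curl2] by (metis mult.assoc)+
  show "t * curl2 d cA cB 0 0 (t^\<gamma>) = t^(\<gamma> * (d - 1) + 1) * curl2 d cA cB 0 0 1"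
    using hom3_axes(3)[OF hom3_curl2, where t = "t^\<gamma>"] by (simp add: power_add power_mult)
qed

lemma eta_field_on_axes:
  fixes cA cB :: coeffs
  assumes "1 \<le> d" "0 < \<gamma>"
  defines "N \<equiv> eta_weight \<gamma> d" and "D \<equiv> curl2 d cA cB"
  shows "eta_field \<gamma> d cA cB 0 t 0 0 = (- N * hom_poly d cB 1 0 0 + of_nat \<gamma> * D 1 0 0) * t^d"
    "eta_field \<gamma> d cA cB 0 0 t 0 = (- N * hom_poly d cB 0 1 0) * t^d"
    "eta_field \<gamma> d cA cB 0 0 0 t = (- N * hom_poly d cB 0 0 1) * t^(\<gamma> * d)"
    "eta_field \<gamma> d cA cB 1 t 0 0 = (N * hom_poly d cA 1 0 0) * t^d"
    "eta_field \<gamma> d cA cB 1 0 t 0 = (N * hom_poly d cA 0 1 0 + of_nat \<gamma> * D 0 1 0) * t^d"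
    "eta_field \<gamma> d cA cB 1 0 0 t = (N * hom_poly d cA 0 0 1) * t^(\<gamma> * d)"
    "eta_field \<gamma> d cA cB 2 t 0 0 = 0 * t^2" "eta_field \<gamma> d cA cB 2 0 t 0 = 0 * t^2"
    "eta_field \<gamma> d cA cB 2 0 0 t = D 0 0 1 * t^(\<gamma> * (d - 1) + 1)"
  unfolding eta_field_def zero_power[OF \<open>0 < \<gamma>\<close>] hom_poly_on_axes[where t = t] mult.assoc
    curl2_on_axes[OF \<open>1 \<le> d\<close>, where t = t] N_def D_def
  by (simp_all add: algebra_simps)

lemma pd_eta_field_origin:
  assumes "2 \<le> d" "1 \<le> \<gamma>"
  shows "pd j (eta_field \<gamma> d cA cB i) 0 0 0 = 0"
proof -
  have "1 \<le> d" "0 < \<gamma>"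
    using assms by simp_all
  note axes = eta_field_on_axes[OF this]
  have exps: "2 \<le> \<gamma> * d" "2 \<le> \<gamma> * (d - 1) + 1"
    using assms mult_le_mono[of 1 \<gamma> 2 d] mult_le_mono[of 1 \<gamma> 1 "d - 1"] by auto
  consider "i = 0" | "i = 1" | "eta_field \<gamma> d cA cB i = eta_field \<gamma> d cA cB 2"
    by (cases "i = 0"; cases "i = 1") (simp_all add: eta_field_def)
  then show ?thesis
  proof cases
    case 1
    show ?thesis
      unfolding 1 by (rule pd_origin_eq_0_of_axis_monomials[OF axes(1-3)]) (use assms exps in auto)
  next
    case 2
    show ?thesis
      unfolding 2 by (rule pd_origin_eq_0_of_axis_monomials[OF axes(4-6)]) (use assms exps in auto)
  next
    case 3
    show ?thesis
      unfolding 3 by (rule pd_origin_eq_0_of_axis_monomials[OF axes(7-9)]) (use assms exps in auto)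
  qed
qed

lemma eta_field_origin: "2 \<le> d \<Longrightarrow> 1 \<le> \<gamma> \<Longrightarrow> eta_field \<gamma> d cA cB i 0 0 0 = 0"
  using hom3_origin[OF hom3_hom_poly, of d] hom3_origin[OF hom3_curl2, of d]
  by (simp add: eta_field_def power_0_left)

lemma quasi_hom_sing_eta:
  assumes euler_relation:
    "\<forall>x y z. x * hom_poly d cA x y z + y * hom_poly d cB x y z + hom_poly (Suc d) cC x y z = 0"
    and nondeg: "\<forall>q\<in>singC (fol_form (hom_poly d cA) (hom_poly d cB) (hom_poly (Suc d) cC)).
                   nondeg_nonreal_sing (fol_form (hom_poly d cA) (hom_poly d cB) (hom_poly (Suc d) cC)) q"
    and "2 \<le> d" and "1 \<le> \<gamma>"
  shows "quasi_hom_sing (eta \<gamma> (hom_poly d cA) (hom_poly d cB) (hom_poly (Suc d) cC)) (0, 0, 0)"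
  unfolding quasi_hom_sing_def
proof (intro exI[of _ UNIV] exI[of _ "\<lambda>x y z. 1"] exI[of _ "eta_field \<gamma> d cA cB"] conjI ballI allI impI)
  fix q :: "complex \<times> complex \<times> complex"
  obtain x0 x1 x2 where q: "q = (x0, x1, x2)"
    by (cases q) auto
  let ?\<eta> = "eta \<gamma> (hom_poly d cA) (hom_poly d cB) (hom_poly (Suc d) cC)"
  show "app3 (dcoef ?\<eta> 1 2) q = app3 (\<lambda>x y z. 1) q * app3 (eta_field \<gamma> d cA cB 0) q"
    "app3 (dcoef ?\<eta> 0 2) q = - (app3 (\<lambda>x y z. 1) q * app3 (eta_field \<gamma> d cA cB 1) q)"
    "app3 (dcoef ?\<eta> 0 1) q = app3 (\<lambda>x y z. 1) q * app3 (eta_field \<gamma> d cA cB 2) q"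
    using dcoef_eta_12[OF euler_relation] dcoef_eta_02[OF euler_relation] dcoef_eta_01[OF euler_relation]
    by (simp_all add: q app3_def)
  show "q \<noteq> (0, 0, 0) \<Longrightarrow> \<exists>i<3. app3 (eta_field \<gamma> d cA cB i) q \<noteq> 0"
    using eta_field_zero_imp_origin[OF euler_relation nondeg, of \<gamma> x0 x1 x2] assms
    unfolding q app3_def by auto
next
  fix mu
  assume "eigenvalue3 (\<lambda>i j. app3 (pd j (eta_field \<gamma> d cA cB i)) (0, 0, 0)) mu"
  then show "mu = 0"
    using pd_eta_field_origin[OF assms(3,4)] unfolding eigenvalue3_def app3_def by auto
qed (use eta_field_origin[OF assms(3,4)] in \<open>simp_all add: holo3_const holo3_eta_field app3_def\<close>)

theorem lemma5p6:
  fixes A B C :: cfun3 and d \<gamma> :: nat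
  assumes "2 \<le> d" and "2 \<le> \<gamma>"
    and "hpoly d A" and "hpoly d B" and "hpoly (Suc d) C"
    and "\<forall>x y z. x * A x y z + y * B x y z + C x y z = 0"
    and "finite (proj_class ` singC (fol_form A B C))"
    and "\<forall>q\<in>singC (fol_form A B C). nondeg_nonreal_sing (fol_form A B C) q"
    and "\<forall>k F. 1 \<le> k \<and> irreducible_hpoly k F \<and> invariant_hpoly (fol_form A B C) d F \<longrightarrow>
           (\<forall>x y z. (x, y, z) \<noteq> (0, 0, 0) \<longrightarrow> (F x y z = 0 \<longleftrightarrow> z = 0))"
  shows "quasi_hom_sing (eta \<gamma> A B C) (0, 0, 0)"
proof -
  obtain cA cB cC where "A = hom_poly d cA" "B = hom_poly d cB" "C = hom_poly (Suc d) cC"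
    using assms(3-5) unfolding hpoly_iff_hom_poly by blast
  with assms show ?thesis
    using quasi_hom_sing_eta[of d cA cB cC \<gamma>] by simp
qed

end
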